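(* Let $A$ be a configuration of at least $3$ pairwise distinct points in $\mathbb{R}^2$ and let $a\in A$. If the points of $A\setminus\{a\}$ are not all contained in a common line, then there is a line $L$ such that $|L\cap A|=2$ and $a\notin L$. *)

theory Defs
  imports "HOL-Analysis.Analysis"
begin

definition is_line :: "(real ^ 2) set \<Rightarrow> bool" where
  "is_line L \<longleftrightarrow> (\<exists>p q. p \<noteq> q \<and> L = affine hull {p, q})"

end

theory Submission
  imports Defs
begin

(* A projective transformation sends a to the point at infinity of the vertical direction, so that
   lines through a become vertical lines while collinearity is preserved.  It then remains to find
   a non-vertical ordinary line of the image.  This is Kelly's proof of the Sylvester-Gallai
   theorem, minimising over non-vertical connecting lines only, carried out in the metric
   K dx^2 + dy^2: a pair (r, line) at minimal distance whose line carries a third point yields a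
   closer pair (s, line r t), and for K large the foot of the perpendicular from r lies so close
   horizontally to r that t can be chosen off the vertical line through r, keeping line r t
   non-vertical. *)

section \<open>Signed area and lines in the plane\<close>

definition signed_area :: "real^2 \<Rightarrow> real^2 \<Rightarrow> real^2 \<Rightarrow> real" where
  "signed_area p q r = (q$1 - p$1) * (r$2 - p$2) - (q$2 - p$2) * (r$1 - p$1)"

lemma vec2_eq_iff: "x = y \<longleftrightarrow> x$1 = y$1 \<and> x$2 = (y::real^2)$2"
  by (simp add: vec_eq_iff forall_2)

lemma signed_area_rotate: "signed_area p q r = signed_area q r p"
  by (simp add: signed_area_def algebra_simps)

lemma signed_area_swap: "signed_area p r q = - signed_area p q r"
  by (simp add: signed_area_def algebra_simps)

lemma in_line_iff_signed_area:
  assumes "p \<noteq> q"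
  shows "r \<in> affine hull {p, q} \<longleftrightarrow> signed_area p q r = 0"
proof
  assume "r \<in> affine hull {p, q}"
  then obtain v where r: "r = p + v *\<^sub>R (q - p)" by (auto simp: affine_hull_2_alt)
  show "signed_area p q r = 0"
    unfolding r signed_area_def by (simp add: algebra_simps)
next
  assume area: "signed_area p q r = 0"
  have "\<exists>v. r$1 = p$1 + v * (q$1 - p$1) \<and> r$2 = p$2 + v * (q$2 - p$2)"
  proof (cases "p$1 = q$1")
    case True
    then have "q$2 - p$2 \<noteq> 0" using assms by (simp add: vec2_eq_iff)
    with True area show ?thesis
      by (intro exI[of _ "(r$2 - p$2) / (q$2 - p$2)"]) (simp add: signed_area_def)
  next
    case False
    then have "q$1 - p$1 \<noteq> 0" by simp
    with area show ?thesis
      by (intro exI[of _ "(r$1 - p$1) / (q$1 - p$1)"]) (simp add: signed_area_def field_simps)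
  qed
  then have "\<exists>v. r = p + v *\<^sub>R (q - p)" by (simp add: vec2_eq_iff)
  then show "r \<in> affine hull {p, q}" by (auto simp: affine_hull_2_alt)
qed

lemma collinear_iff_signed_area:
  "collinear S \<longleftrightarrow> (\<forall>p\<in>S. \<forall>q\<in>S. \<forall>r\<in>S. signed_area p q r = 0)"
proof
  assume col: "collinear S"
  show "\<forall>p\<in>S. \<forall>q\<in>S. \<forall>r\<in>S. signed_area p q r = 0"
  proof (intro ballI)
    fix p q r assume "p \<in> S" "q \<in> S" "r \<in> S"
    then have "collinear {p, q, r}" by (auto intro: collinear_subset[OF col])
    then show "signed_area p q r = 0"
      by (cases "p = q") (auto simp: signed_area_def collinear_3_affine_hull in_line_iff_signed_area)
  qed
next
  assume area: "\<forall>p\<in>S. \<forall>q\<in>S. \<forall>r\<in>S. signed_area p q r = 0"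
  show "collinear S"
  proof (cases "\<exists>p\<in>S. \<exists>q\<in>S. p \<noteq> q")
    case True
    then obtain p q where "p \<in> S" "q \<in> S" "p \<noteq> q" by blast
    then have "S \<subseteq> affine hull {p, q}" using area in_line_iff_signed_area by blast
    then show ?thesis
      using collinear_subset collinear_affine_hull_collinear collinear_2 by blast
  next
    case False
    then have "S = {} \<or> (\<exists>p. S = {p})" by blast
    then show ?thesis by auto
  qed
qed

lemma nonvertical_line_eq_if_x_eq:
  assumes "p$1 \<noteq> q$1" and "s \<in> affine hull {p, q}" and "s' \<in> affine hull {p, q}" and "s$1 = s'$1"
  shows "s = s'"
proof -
  obtain u u' where s: "s = p + u *\<^sub>R (q - p)" and s': "s' = p + u' *\<^sub>R (q - p)"
    using assms(2,3) by (auto simp: affine_hull_2_alt)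
  have "u = u'" using assms(1,4) unfolding s s' by simp
  then show ?thesis unfolding s s' by simp
qed

section \<open>Kelly's argument in a stretched metric\<close>

lemma finite_uniform_separation:
  fixes T :: "real set"
  assumes "finite T"
  shows "\<exists>d>0. \<forall>x\<in>T. \<forall>y\<in>T. x \<noteq> y \<longrightarrow> d \<le> \<bar>x - y\<bar>"
proof -
  have "finite ((\<lambda>(x, y). x - y) ` (T \<times> T))" using assms by simp
  from finite_set_avoid[OF this, of 0] obtain d where "d > 0"
    and "\<forall>z\<in>(\<lambda>(x, y). x - y) ` (T \<times> T). z \<noteq> 0 \<longrightarrow> d \<le> dist 0 z" by blast
  then show ?thesis by (intro exI[of _ d]) (auto simp: dist_real_def)
qed

lemma ex_uniform_denominator_bound:
  fixes a b c :: "'i \<Rightarrow> real"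
  assumes "finite I" and "e > 0" and "\<forall>i\<in>I. 0 < a i \<and> 0 \<le> b i"
  shows "\<exists>K>0. \<forall>i\<in>I. \<bar>c i\<bar> / (K * a i + b i) < e"
proof (intro exI conjI ballI)
  define K where "K = 1 + (\<Sum>i\<in>I. \<bar>c i\<bar> / (e * a i))"
  have terms_nonneg: "0 \<le> \<bar>c i\<bar> / (e * a i)" if "i \<in> I" for i
    using assms(2,3) that by (auto intro: divide_nonneg_pos)
  then show "K > 0"
    unfolding K_def by (simp add: add_pos_nonneg sum_nonneg)
  fix i assume i: "i \<in> I"
  have "\<bar>c i\<bar> / (e * a i) \<le> (\<Sum>i\<in>I. \<bar>c i\<bar> / (e * a i))"
    using assms(1) i terms_nonneg by (intro member_le_sum) auto
  then have "\<bar>c i\<bar> / (e * a i) < K" unfolding K_def by simp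
  then have "\<bar>c i\<bar> < e * (K * a i)"
    using assms(2,3) i by (simp add: divide_less_eq mult_ac)
  also have "\<dots> \<le> e * (K * a i + b i)"
    using assms(2,3) i by simp
  finally show "\<bar>c i\<bar> / (K * a i + b i) < e"
    using assms(3) i \<open>K > 0\<close> by (simp add: divide_less_eq mult.commute add_pos_nonneg)
qed

(* The farther point of a pair on one side of xf is not x0: x0 lies within d/2 of xf, every other
   candidate at least d/2 away. *)
lemma same_side_pair:
  fixes a1 a2 a3 x0 xf d :: real
  assumes "d > 0" and "\<bar>xf - x0\<bar> < d / 2" and "distinct [a1, a2, a3]"
    and "\<forall>a\<in>{a1, a2, a3}. a = x0 \<or> d \<le> \<bar>a - x0\<bar>"
  shows "\<exists>u\<in>{a1, a2, a3}. \<exists>v\<in>{a1, a2, a3}. u \<noteq> v \<and> v \<noteq> x0 \<and> \<bar>u - v\<bar> \<le> \<bar>v - xf\<bar>"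
proof -
  have "\<exists>u\<in>{a1, a2, a3}. \<exists>v\<in>{a1, a2, a3}. u \<noteq> v \<and> 0 \<le> (u - xf) * (v - xf)"
    using assms(3)
    by (cases "a1 \<ge> xf"; cases "a2 \<ge> xf"; cases "a3 \<ge> xf") (auto simp: zero_le_mult_iff)
  then have "\<exists>u\<in>{a1, a2, a3}. \<exists>v\<in>{a1, a2, a3}.
      u \<noteq> v \<and> 0 \<le> (u - xf) * (v - xf) \<and> \<bar>u - xf\<bar> \<le> \<bar>v - xf\<bar>"
    by (metis linear mult.commute)
  then obtain u v where uv: "u \<in> {a1, a2, a3}" "v \<in> {a1, a2, a3}" "u \<noteq> v"
    and same_side: "0 \<le> (u - xf) * (v - xf)" and closer: "\<bar>u - xf\<bar> \<le> \<bar>v - xf\<bar>" by blast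
  have "v \<noteq> x0"
  proof
    assume "v = x0"
    then have "d \<le> \<bar>u - x0\<bar>" using assms(4) uv by blast
    then show False using assms(2) closer \<open>v = x0\<close> by linarith
  qed
  moreover have "\<bar>u - v\<bar> \<le> \<bar>v - xf\<bar>"
    using same_side closer by (auto simp: zero_le_mult_iff abs_if)
  ultimately show ?thesis using uv by blast
qed

(* With the x-axis stretched by a factor sqrt K, K * stretched_dist K p q r is the squared distance
   from r to the line p q, and foot_x K p q r is the abscissa of the foot of the perpendicular. *)
definition stretched_norm2 :: "real \<Rightarrow> real^2 \<Rightarrow> real" where
  "stretched_norm2 K v = K * (v$1)\<^sup>2 + (v$2)\<^sup>2"

definition stretched_dist :: "real \<Rightarrow> real^2 \<Rightarrow> real^2 \<Rightarrow> real^2 \<Rightarrow> real" where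
  "stretched_dist K p q r = (signed_area p q r)\<^sup>2 / stretched_norm2 K (q - p)"

definition foot_x :: "real \<Rightarrow> real^2 \<Rightarrow> real^2 \<Rightarrow> real^2 \<Rightarrow> real" where
  "foot_x K p q r = r$1 + (q$2 - p$2) * signed_area p q r / stretched_norm2 K (q - p)"

lemma stretched_norm2_pos: "K > 0 \<Longrightarrow> v \<noteq> 0 \<Longrightarrow> stretched_norm2 K v > 0"
  by (auto simp: stretched_norm2_def vec2_eq_iff add_pos_nonneg add_nonneg_pos)

(* Pythagoras for r, its foot f on the line through t with direction (dx, dy), and t, where
   (wx, wy) = r - t, multiplied through by (K dx^2 + dy^2) dx^2. *)
lemma stretched_pythagoras:
  fixes K dx dy wx wy :: real
  shows "(K*wx\<^sup>2 + wy\<^sup>2) * (K*dx\<^sup>2 + dy\<^sup>2) * dx\<^sup>2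
       = ((K*dx\<^sup>2 + dy\<^sup>2)*wx + dy*(dx*wy - dy*wx))\<^sup>2 + K*(dx*wy - dy*wx)\<^sup>2*dx\<^sup>2"
  by algebra

(* Both distances have the numerator (signed_area t s r)^2; the denominators are the squared
   lengths of s - t and r - t, and s - t is the shorter one since s lies between t and the foot. *)
lemma kelly_step:
  assumes "K > 0" and "s$1 \<noteq> t$1" and area: "signed_area t s r \<noteq> 0"
    and between: "\<bar>s$1 - t$1\<bar> \<le> \<bar>t$1 - foot_x K t s r\<bar>"
  shows "stretched_dist K r t s < stretched_dist K t s r"
proof -
  define dx dy wx wy where "dx = s$1 - t$1" and "dy = s$2 - t$2" and "wx = r$1 - t$1" and "wy = r$2 - t$2"
  define A N M where "A = signed_area t s r" and "N = stretched_norm2 K (s - t)"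
    and "M = stretched_norm2 K (r - t)"
  have A_eq: "A = dx*wy - dy*wx" and N_eq: "N = K*dx\<^sup>2 + dy\<^sup>2" and M_eq: "M = K*wx\<^sup>2 + wy\<^sup>2"
    by (simp_all add: A_def N_def M_def dx_def dy_def wx_def wy_def signed_area_def stretched_norm2_def)
  have "dx \<noteq> 0" using assms(2) by (simp add: dx_def)
  have "N > 0" unfolding N_def using assms(1,2) by (intro stretched_norm2_pos) (auto simp: vec2_eq_iff)
  have foot: "N * (t$1 - foot_x K t s r) = - (N*wx + dy*A)"
    using \<open>N > 0\<close> by (simp add: foot_x_def A_def N_def wx_def dy_def field_simps)
  have "dx\<^sup>2 \<le> (t$1 - foot_x K t s r)\<^sup>2"
    using between by (simp add: abs_le_square_iff dx_def)
  then have "N\<^sup>2 * dx\<^sup>2 \<le> N\<^sup>2 * (t$1 - foot_x K t s r)\<^sup>2"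
    by (simp add: mult_left_mono)
  also have "\<dots> = (N*wx + dy*A)\<^sup>2"
    by (simp only: power_mult_distrib[symmetric] foot power2_minus)
  also have "\<dots> < (N*wx + dy*A)\<^sup>2 + K*A\<^sup>2*dx\<^sup>2"
    using assms(1) area \<open>dx \<noteq> 0\<close> by (simp add: A_def)
  also have "\<dots> = M * N * dx\<^sup>2"
    unfolding A_eq M_eq N_eq by (rule stretched_pythagoras[symmetric])
  finally have "N * (N * dx\<^sup>2) < M * (N * dx\<^sup>2)"
    by (simp add: power2_eq_square ac_simps)
  then have "N < M"
    using \<open>N > 0\<close> \<open>dx \<noteq> 0\<close> by (simp add: mult_less_cancel_right_pos)
  moreover have "signed_area r t s = A"
    by (simp add: A_def signed_area_def algebra_simps)
  then have "stretched_dist K r t s = A\<^sup>2 / M"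
    by (simp add: stretched_dist_def M_def stretched_norm2_def power2_commute)
  moreover have "stretched_dist K t s r = A\<^sup>2 / N"
    by (simp add: stretched_dist_def A_def N_def)
  ultimately show ?thesis using \<open>N > 0\<close> area by (simp add: A_def divide_strict_left_mono)
qed

lemma stretched_line_invariant:
  assumes "t \<in> affine hull {p, q}" and "s \<in> affine hull {p, q}" and "t \<noteq> s"
  shows "signed_area t s r = 0 \<longleftrightarrow> signed_area p q r = 0"
    and "stretched_dist K t s r = stretched_dist K p q r"
    and "foot_x K t s r = foot_x K p q r"
proof -
  obtain u v where t: "t = p + u *\<^sub>R (q - p)" and s: "s = p + v *\<^sub>R (q - p)"
    using assms(1,2) by (auto simp: affine_hull_2_alt)
  have "v \<noteq> u" using assms(3) unfolding s t by auto
  have area: "signed_area t s r = (v - u) * signed_area p q r"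
    unfolding t s signed_area_def by (simp add: algebra_simps)
  have norm: "stretched_norm2 K (s - t) = (v - u)\<^sup>2 * stretched_norm2 K (q - p)"
    unfolding t s stretched_norm2_def by (simp add: algebra_simps power2_eq_square)
  have dy: "s$2 - t$2 = (v - u) * (q$2 - p$2)"
    unfolding t s by (simp add: algebra_simps)
  show "signed_area t s r = 0 \<longleftrightarrow> signed_area p q r = 0"
    using area \<open>v \<noteq> u\<close> by simp
  show "stretched_dist K t s r = stretched_dist K p q r"
    using \<open>v \<noteq> u\<close> by (simp add: stretched_dist_def area norm power_mult_distrib)
  show "foot_x K t s r = foot_x K p q r"
    using \<open>v \<noteq> u\<close> by (simp add: foot_x_def area norm dy power2_eq_square)
qed

lemma kelly_minimal_line_ordinary:
  assumes "K > 0" and "d > 0"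
    and sep: "\<forall>x\<in>S. \<forall>y\<in>S. x$1 \<noteq> y$1 \<longrightarrow> d \<le> \<bar>x$1 - y$1\<bar>"
    and S: "p \<in> S" "q \<in> S" "r \<in> S" and "p$1 \<noteq> q$1" and area: "signed_area p q r \<noteq> 0"
    and close: "\<bar>foot_x K p q r - r$1\<bar> < d / 2"
    and minimal: "\<forall>t\<in>S. \<forall>s\<in>S. t$1 \<noteq> r$1 \<longrightarrow> signed_area r t s \<noteq> 0 \<longrightarrow>
                    stretched_dist K p q r \<le> stretched_dist K r t s"
  shows "S \<inter> affine hull {p, q} = {p, q}"
proof (rule ccontr)
  assume "S \<inter> affine hull {p, q} \<noteq> {p, q}"
  then obtain s where s: "s \<in> S" "s \<in> affine hull {p, q}" "s \<noteq> p" "s \<noteq> q"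
    using S(1,2) hull_inc[of p "{p, q}"] hull_inc[of q "{p, q}"] by blast
  have on_line: "x \<in> affine hull {p, q}" if "x \<in> {p, q, s}" for x
    using that s(2) hull_inc[of _ "{p, q}"] by auto
  have "s$1 \<noteq> x$1" if "x \<in> {p, q}" for x
    using nonvertical_line_eq_if_x_eq[OF \<open>p$1 \<noteq> q$1\<close> s(2) hull_inc[OF that]] s(3,4) that by auto
  then have "distinct [p$1, q$1, s$1]" using \<open>p$1 \<noteq> q$1\<close> by force
  moreover have "\<forall>a\<in>{p$1, q$1, s$1}. a = r$1 \<or> d \<le> \<bar>a - r$1\<bar>"
    using sep S s(1) by auto
  ultimately have "\<exists>u\<in>{p$1, q$1, s$1}. \<exists>v\<in>{p$1, q$1, s$1}.
      u \<noteq> v \<and> v \<noteq> r$1 \<and> \<bar>u - v\<bar> \<le> \<bar>v - foot_x K p q r\<bar>"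
    using same_side_pair[OF \<open>d > 0\<close>] close by blast
  then obtain t s' where ts: "t \<in> {p, q, s}" "s' \<in> {p, q, s}" and "s'$1 \<noteq> t$1" "t$1 \<noteq> r$1"
    and between: "\<bar>s'$1 - t$1\<bar> \<le> \<bar>t$1 - foot_x K p q r\<bar>"
    by blast
  then have "t \<noteq> s'" by blast
  note invariant = stretched_line_invariant[OF on_line[OF ts(1)] on_line[OF ts(2)] \<open>t \<noteq> s'\<close>]
  have area': "signed_area t s' r \<noteq> 0" using area invariant(1) by simp
  have "t \<in> S" "s' \<in> S" using ts S s(1) by auto
  then have "stretched_dist K p q r \<le> stretched_dist K r t s'"
    using minimal \<open>t$1 \<noteq> r$1\<close> area' signed_area_rotate[of r t s'] by auto
  moreover have "stretched_dist K r t s' < stretched_dist K p q r"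
    using kelly_step[OF \<open>K > 0\<close> \<open>s'$1 \<noteq> t$1\<close> area'] between invariant(2,3) by simp
  ultimately show False by simp
qed

lemma sylvester_gallai_nonvertical:
  fixes S :: "(real^2) set"
  assumes "finite S" and "\<not> collinear S"
  shows "\<exists>p\<in>S. \<exists>q\<in>S. p$1 \<noteq> q$1 \<and> S \<inter> affine hull {p, q} = {p, q}"
proof -
  define P where "P = {(p, q, r). p \<in> S \<and> q \<in> S \<and> r \<in> S \<and> p$1 \<noteq> q$1 \<and> signed_area p q r \<noteq> 0}"
  have "finite P"
    by (rule finite_subset[of _ "S \<times> S \<times> S"]) (auto simp: P_def assms(1))
  have "P \<noteq> {}"
  proof -
    obtain x y z where "x \<in> S" "y \<in> S" "z \<in> S" and "signed_area x y z \<noteq> 0"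
      using assms(2) collinear_iff_signed_area by blast
    then have "(x, y, z) \<in> P \<or> (x, z, y) \<in> P"
      using signed_area_swap[of x y z] by (auto simp: P_def signed_area_def)
    then show ?thesis by blast
  qed
  obtain d where "d > 0" and sep: "\<forall>x\<in>S. \<forall>y\<in>S. x$1 \<noteq> y$1 \<longrightarrow> d \<le> \<bar>x$1 - y$1\<bar>"
    using finite_uniform_separation[of "(\<lambda>x. x$1) ` S"] assms(1) by auto
  obtain K where "K > 0" and close: "\<forall>(p, q, r)\<in>P. \<bar>foot_x K p q r - r$1\<bar> < d / 2"
  proof -
    have "\<exists>K>0. \<forall>(p, q, r)\<in>P.
        \<bar>(q$2 - p$2) * signed_area p q r\<bar> / (K * (q$1 - p$1)\<^sup>2 + (q$2 - p$2)\<^sup>2) < d / 2"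
      using ex_uniform_denominator_bound[OF \<open>finite P\<close>, of "d / 2" "\<lambda>(p, q, r). (q$1 - p$1)\<^sup>2"
          "\<lambda>(p, q, r). (q$2 - p$2)\<^sup>2" "\<lambda>(p, q, r). (q$2 - p$2) * signed_area p q r"] \<open>d > 0\<close>
      by (auto simp: P_def)
    then show ?thesis using that by (auto simp: foot_x_def stretched_norm2_def)
  qed
  obtain p q r where "(p, q, r) \<in> P"
    and minimal: "\<forall>t'\<in>P. stretched_dist K p q r \<le> (\<lambda>(p, q, r). stretched_dist K p q r) t'"
    using ex_is_arg_min_if_finite[OF \<open>finite P\<close> \<open>P \<noteq> {}\<close>, of "\<lambda>(p, q, r). stretched_dist K p q r"]
    by (force simp: is_arg_min_linorder)
  then have pqr: "p \<in> S" "q \<in> S" "r \<in> S" "p$1 \<noteq> q$1" "signed_area p q r \<noteq> 0"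
    by (auto simp: P_def)
  have "S \<inter> affine hull {p, q} = {p, q}"
  proof (rule kelly_minimal_line_ordinary[OF \<open>K > 0\<close> \<open>d > 0\<close> sep pqr])
    show "\<bar>foot_x K p q r - r$1\<bar> < d / 2" using close \<open>(p, q, r) \<in> P\<close> by auto
    show "\<forall>t\<in>S. \<forall>s\<in>S. t$1 \<noteq> r$1 \<longrightarrow> signed_area r t s \<noteq> 0 \<longrightarrow>
            stretched_dist K p q r \<le> stretched_dist K r t s"
      using minimal pqr(3) by (auto simp: P_def)
  qed
  then show ?thesis using pqr by blast
qed

section \<open>Sending a point to infinity\<close>

(* In homogeneous coordinates p maps to [p$2 - a$2 : 1 : projective_denom a t p], so a goes to the
   point at infinity [0 : 1 : 0] of the vertical direction; t is chosen to keep the denominator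
   nonzero on the configuration. *)
definition projective_denom :: "real^2 \<Rightarrow> real \<Rightarrow> real^2 \<Rightarrow> real" where
  "projective_denom a t p = (p$1 - a$1) + t * (p$2 - a$2)"

definition send_to_infinity :: "real^2 \<Rightarrow> real \<Rightarrow> real^2 \<Rightarrow> real^2" where
  "send_to_infinity a t p = vector [(p$2 - a$2) / projective_denom a t p, 1 / projective_denom a t p]"

lemma projective_signed_area_identity:
  fixes x1 y1 x2 y2 x3 y3 t :: real
  defines "u1 \<equiv> x1 + t * y1" and "u2 \<equiv> x2 + t * y2" and "u3 \<equiv> x3 + t * y3"
  assumes "u1 \<noteq> 0" "u2 \<noteq> 0" "u3 \<noteq> 0"
  shows "((y2/u2 - y1/u1) * (1/u3 - 1/u1) - (1/u2 - 1/u1) * (y3/u3 - y1/u1)) * (u1 * u2 * u3)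
       = (x2 - x1) * (y3 - y1) - (y2 - y1) * (x3 - x1)"
proof -
  have "((y2/u2 - y1/u1) * (1/u3 - 1/u1) - (1/u2 - 1/u1) * (y3/u3 - y1/u1)) * (u1 * u2 * u3)
      = (y2*u1 - y1*u2) * (u1 - u3) / u1 - (u1 - u2) * (y3*u1 - y1*u3) / u1"
    using assms(4-6) by (simp add: field_simps)
  also have "\<dots> = y2*u1 - y2*u3 - y1*u2 + y3*u2 - y3*u1 + y1*u3"
    using assms(4) by (simp add: field_simps)
  also have "\<dots> = (x2 - x1) * (y3 - y1) - (y2 - y1) * (x3 - x1)"
    unfolding u1_def u2_def u3_def by (simp add: algebra_simps)
  finally show ?thesis .
qed

lemma signed_area_send_to_infinity:
  assumes "projective_denom a t p \<noteq> 0" "projective_denom a t q \<noteq> 0" "projective_denom a t r \<noteq> 0"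
  shows "signed_area (send_to_infinity a t p) (send_to_infinity a t q) (send_to_infinity a t r)
           * (projective_denom a t p * projective_denom a t q * projective_denom a t r)
         = signed_area p q r"
  using projective_signed_area_identity[of "p$1 - a$1" t "p$2 - a$2" "q$1 - a$1" "q$2 - a$2" "r$1 - a$1" "r$2 - a$2"] assms
  by (simp add: signed_area_def send_to_infinity_def projective_denom_def)

lemma send_to_infinity_x_diff:
  assumes "projective_denom a t p \<noteq> 0" "projective_denom a t q \<noteq> 0"
  shows "((send_to_infinity a t q)$1 - (send_to_infinity a t p)$1)
           * (projective_denom a t p * projective_denom a t q) = signed_area p q a"
proof -
  define u v where "u = projective_denom a t p" and "v = projective_denom a t q"
  have "((send_to_infinity a t q)$1 - (send_to_infinity a t p)$1) * (u * v) = (q$2 - a$2) * u - (p$2 - a$2) * v"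
    using assms by (simp add: send_to_infinity_def u_def v_def field_simps)
  also have "\<dots> = signed_area p q a"
    by (simp add: u_def v_def projective_denom_def signed_area_def algebra_simps)
  finally show ?thesis by (simp add: u_def v_def)
qed

lemma inj_on_send_to_infinity:
  assumes "\<forall>p\<in>A. projective_denom a t p \<noteq> 0"
  shows "inj_on (send_to_infinity a t) A"
proof (rule inj_onI)
  fix p q assume "p \<in> A" "q \<in> A" and eq: "send_to_infinity a t p = send_to_infinity a t q"
  have recover: "x$2 - a$2 = (send_to_infinity a t x)$1 * projective_denom a t x
    \<and> 1 = (send_to_infinity a t x)$2 * projective_denom a t x" if "x \<in> A" for x
    using assms that by (simp add: send_to_infinity_def)
  have "(send_to_infinity a t p)$2 * projective_denom a t p = 1"
    "(send_to_infinity a t p)$2 * projective_denom a t q = 1"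
    using recover[OF \<open>p \<in> A\<close>] recover[OF \<open>q \<in> A\<close>] eq by simp_all
  then have "projective_denom a t p = projective_denom a t q"
    by (metis mult_cancel_left zero_neq_one mult_zero_left)
  moreover then have "p$2 = q$2"
    using recover[OF \<open>p \<in> A\<close>] recover[OF \<open>q \<in> A\<close>] eq by simp
  ultimately show "p = q" by (simp add: projective_denom_def vec2_eq_iff)
qed

lemma ex_projective_denom_nonzero:
  assumes "finite A" and "a \<notin> A"
  shows "\<exists>t. \<forall>p\<in>A. projective_denom a t p \<noteq> 0"
proof -
  obtain t where t: "t \<notin> (\<lambda>p. - (p$1 - a$1) / (p$2 - a$2)) ` A"
    using ex_new_if_finite[OF infinite_UNIV_char_0] assms(1) by blast
  have "projective_denom a t p \<noteq> 0" if "p \<in> A" for p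
  proof
    assume denom: "projective_denom a t p = 0"
    show False
    proof (cases "p$2 = a$2")
      case True
      then have "p = a" using denom by (simp add: projective_denom_def vec2_eq_iff)
      then show False using assms(2) that by simp
    next
      case False
      then have "t = - (p$1 - a$1) / (p$2 - a$2)"
        using denom by (simp add: projective_denom_def field_simps)
      then show False using t that by blast
    qed
  qed
  then show ?thesis by blast
qed

lemma send_to_infinity_in_line_iff:
  assumes "projective_denom a t p \<noteq> 0" "projective_denom a t q \<noteq> 0" "projective_denom a t r \<noteq> 0"
    and "p \<noteq> q" and "send_to_infinity a t p \<noteq> send_to_infinity a t q"
  shows "send_to_infinity a t r \<in> affine hull {send_to_infinity a t p, send_to_infinity a t q}
           \<longleftrightarrow> r \<in> affine hull {p, q}"
proof -
  have "signed_area (send_to_infinity a t p) (send_to_infinity a t q) (send_to_infinity a t r) = 0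
          \<longleftrightarrow> signed_area p q r = 0"
    using signed_area_send_to_infinity[OF assms(1-3)] assms(1-3) by auto
  then show ?thesis
    unfolding in_line_iff_signed_area[OF assms(4)] in_line_iff_signed_area[OF assms(5)] .
qed

lemma not_collinear_image_send_to_infinity:
  assumes "\<not> collinear B" and denom: "\<forall>p\<in>B. projective_denom a t p \<noteq> 0"
  shows "\<not> collinear (send_to_infinity a t ` B)"
proof -
  obtain p q r where pqr: "p \<in> B" "q \<in> B" "r \<in> B" and "signed_area p q r \<noteq> 0"
    using assms(1) unfolding collinear_iff_signed_area by blast
  then have "signed_area (send_to_infinity a t p) (send_to_infinity a t q) (send_to_infinity a t r) \<noteq> 0"
    using signed_area_send_to_infinity[of a t p q r] denom by force
  then show ?thesis
    unfolding collinear_iff_signed_area using pqr by blast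
qed

lemma ordinary_line_from_send_to_infinity:
  assumes denom: "\<forall>p\<in>B. projective_denom a t p \<noteq> 0" and "p \<in> B" "q \<in> B"
    and nonvertical: "(send_to_infinity a t p)$1 \<noteq> (send_to_infinity a t q)$1"
    and ordinary: "send_to_infinity a t ` B \<inter> affine hull {send_to_infinity a t p, send_to_infinity a t q}
                     = {send_to_infinity a t p, send_to_infinity a t q}"
  shows "a \<notin> affine hull {p, q}" and "B \<inter> affine hull {p, q} = {p, q}"
proof -
  let ?f = "send_to_infinity a t"
  have "p \<noteq> q" "?f p \<noteq> ?f q" using nonvertical by auto
  have "signed_area p q a \<noteq> 0"
    using send_to_infinity_x_diff[of a t p q] denom \<open>p \<in> B\<close> \<open>q \<in> B\<close> nonvertical by force
  then show "a \<notin> affine hull {p, q}"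
    using in_line_iff_signed_area[OF \<open>p \<noteq> q\<close>] by blast
  show "B \<inter> affine hull {p, q} = {p, q}"
  proof
    show "{p, q} \<subseteq> B \<inter> affine hull {p, q}"
      using \<open>p \<in> B\<close> \<open>q \<in> B\<close> by (auto simp: hull_inc)
  next
    show "B \<inter> affine hull {p, q} \<subseteq> {p, q}"
    proof
      fix r assume r: "r \<in> B \<inter> affine hull {p, q}"
      then have "?f r \<in> affine hull {?f p, ?f q}"
        using send_to_infinity_in_line_iff[of a t p q r] denom \<open>p \<in> B\<close> \<open>q \<in> B\<close> \<open>p \<noteq> q\<close> \<open>?f p \<noteq> ?f q\<close>
        by blast
      then have "?f r \<in> {?f p, ?f q}"
        using ordinary r by blast
      then show "r \<in> {p, q}"
        using inj_on_send_to_infinity[OF denom] r \<open>p \<in> B\<close> \<open>q \<in> B\<close> by (auto dest: inj_onD)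
    qed
  qed
qed

theorem mainTheorem20:
  fixes A :: "(real ^ 2) set" and a :: "real ^ 2"
  assumes "finite A" and "card A \<ge> 3" and "a \<in> A"
    and "\<not> collinear (A - {a})"
  shows "\<exists>L. is_line L \<and> card (L \<inter> A) = 2 \<and> a \<notin> L"
proof -
  define B where "B = A - {a}"
  have "finite B" "a \<notin> B" using assms(1) by (auto simp: B_def)
  then obtain t where denom: "\<forall>p\<in>B. projective_denom a t p \<noteq> 0"
    using ex_projective_denom_nonzero by blast
  have "\<not> collinear (send_to_infinity a t ` B)"
    using not_collinear_image_send_to_infinity[OF assms(4)[folded B_def] denom] .
  then obtain p q where "p \<in> B" "q \<in> B"
    and nonvertical: "(send_to_infinity a t p)$1 \<noteq> (send_to_infinity a t q)$1"
    and "send_to_infinity a t ` B \<inter> affine hull {send_to_infinity a t p, send_to_infinity a t q}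
           = {send_to_infinity a t p, send_to_infinity a t q}"
    using sylvester_gallai_nonvertical[OF finite_imageI[OF \<open>finite B\<close>]] by blast
  note line = ordinary_line_from_send_to_infinity[OF denom this]
  have "p \<noteq> q" using nonvertical by auto
  have "A \<inter> affine hull {p, q} = {p, q}"
    using line \<open>a \<in> A\<close> unfolding B_def by blast
  with \<open>p \<noteq> q\<close> show ?thesis
    using line(1) unfolding is_line_def by (intro exI[of _ "affine hull {p, q}"]) (auto simp: Int_commute)
qed

end
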